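(* Let $n\ge 2$ and let $f:\{0,1\}^n\to\{0,1\}^{n-1}$ be a function that eliminates one bit, i.e. there is $k\in\{0,\dots,n-1\}$ such that $f(x_{n-1}\dots x_{k+1}x_kx_{k-1}\dots x_0)=x_{n-1}\dots x_{k+1}x_{k-1}\dots x_0$ for all inputs. For $i=0,\dots,n-2$, run the algorithm $\mathrm{GPK}(\mathbf{e}_i)$ (with $m=n-1$), where $\mathbf{e}_i\in\{0,1\}^{n-1}$ is the string with a single $1$ in position $i$. Then each run outputs, with certainty, a string of the form $\mathbf{e}'_j\in\{0,1\}^n$ (the string of length $n$ with a single $1$ in position $j$), the $n-1$ outputs are distinct, and the unique $j\in\{0,\dots,n-1\}$ such that $\mathbf{e}'_j$ is not among the outputs is $j=k$, the eliminated bit. Hence the eliminated bit is determined by these $n-1$ runs.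
   Context: Bits of a string $\mathbf{x}=x_{n-1}\dots x_1x_0$ are indexed from the right starting at $0$; the string with a single $1$ in position $i$ is $0^{\,\ell-1-i}\,1\,0^{\,i}$ (of length $\ell$). For strings $\mathbf{y},\mathbf{z}$ of equal length, $\mathbf{y}\oplus\mathbf{z}$ is bitwise XOR and $\mathbf{y}\cdot\mathbf{z}=\bigoplus_j y_jz_j$. For $f:\{0,1\}^n\to\{0,1\}^m$, $\mathbf{U}_f$ is the unitary with $\mathbf{U}_f(\ket{\mathbf{x}}_n\otimes\ket{\mathbf{z}}_m)=\ket{\mathbf{x}}_n\otimes\ket{\mathbf{z}\oplus f(\mathbf{x})}_m$; $\mathbf{H}_k=\mathbf{H}^{\otimes k}$ with $\mathbf{H}$ the one-qubit Hadamard gate. The algorithm $\mathrm{GPK}(\mathbf{y})$ for a marker $\mathbf{y}\in\{0,1\}^m$: start in $\ket{\mathbf{0}}_n\otimes\ket{\mathbf{0}}_m$; apply Pauli $\mathbf{X}$ gates to the second register to obtain $\ket{\mathbf{0}}_n\otimes\ket{\mathbf{y}}_m$; apply $\mathbf{H}_{n+m}$ to all qubits; apply $\mathbf{U}_f$; apply $\mathbf{H}_n$ to the first register; measure the first register in the computational basis, obtaining an output $\delta\in\{0,1\}^n$. *)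

theory Defs
  imports Complex_Main
begin

text \<open>A bit string of length l is encoded as a natural number
x < 2^l, bit i of the string (indexed from the right, starting at 0) being
bit x i. The string with a single 1 in position i is 2^i. A state of a
register of q qubits is a function from basis indices {0..<2^q} to complex
amplitudes. For the two-register system |x>_n (x) |z>_m the basis index is
x * 2^m + z, so qubit j < m is bit j of the second register and qubit m + i
is bit i of the first register.\<close>

type_synonym state = "nat \<Rightarrow> complex"

definition ket :: "nat \<Rightarrow> state" where
  "ket b = (\<lambda>u. if u = b then 1 else 0)"

definition pauliX :: "nat \<Rightarrow> state \<Rightarrow> state" where
  "pauliX j \<psi> = (\<lambda>u. \<psi> (flip_bit j u))"

text \<open>One-qubit Hadamard gate on qubit j:
  H|0> = (|0>+|1>)/sqrt 2,  H|1> = (|0>-|1>)/sqrt 2.\<close>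
definition hadamard :: "nat \<Rightarrow> state \<Rightarrow> state" where
  "hadamard j \<psi> = (\<lambda>u. (\<psi> (unset_bit j u) + (if bit u j then -1 else 1) * \<psi> (set_bit j u))
                         / complex_of_real (sqrt 2))"

text \<open>The oracle U_f : |x>_n |z>_m \<mapsto> |x>_n |z xor f x>_m (a permutation of basis states,
  which is an involution).\<close>
definition Uf :: "nat \<Rightarrow> nat \<Rightarrow> (nat \<Rightarrow> nat) \<Rightarrow> state \<Rightarrow> state" where
  "Uf n m f \<psi> = (\<lambda>u. if u < 2 ^ (n + m)
      then \<psi> ((u div 2 ^ m) * 2 ^ m + xor (u mod 2 ^ m) (f (u div 2 ^ m)))
      else 0)"

definition gpk_state :: "nat \<Rightarrow> nat \<Rightarrow> (nat \<Rightarrow> nat) \<Rightarrow> nat \<Rightarrow> state" where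
  "gpk_state n m f y =
     (let \<psi>0 = ket 0;
          \<psi>1 = fold (\<lambda>j \<psi>. if bit y j then pauliX j \<psi> else \<psi>) [0..<m] \<psi>0;
          \<psi>2 = fold hadamard [0..<n + m] \<psi>1;
          \<psi>3 = Uf n m f \<psi>2;
          \<psi>4 = fold hadamard [m..<n + m] \<psi>3
      in \<psi>4)"

text \<open>Probability that measuring the first register (in the computational basis)
  yields the output \<delta>.\<close>
definition gpk_prob :: "nat \<Rightarrow> nat \<Rightarrow> (nat \<Rightarrow> nat) \<Rightarrow> nat \<Rightarrow> nat \<Rightarrow> real" where
  "gpk_prob n m f y \<delta> = (\<Sum>z<2 ^ m. (cmod (gpk_state n m f y (\<delta> * 2 ^ m + z)))\<^sup>2)"

definition eliminates_bit :: "nat \<Rightarrow> (nat \<Rightarrow> nat) \<Rightarrow> nat \<Rightarrow> bool" where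
  "eliminates_bit n f k \<longleftrightarrow> k < n \<and>
     (\<forall>x < 2 ^ n. f x < 2 ^ (n - 1) \<and>
        (\<forall>i < k. bit (f x) i = bit x i) \<and>
        (\<forall>i. k \<le> i \<and> i < n - 1 \<longrightarrow> bit (f x) i = bit x (i + 1)))"

end

theory Submission
  imports Defs
begin

text \<open>All states occurring in a run of GPK(e_i) are product states, and all gates act
  qubitwise on them. X and the first Hadamard layer prepare |-> on output qubit i and |+>
  on every other qubit. Since f copies input bit j into output bit i, U_f merely multiplies
  the amplitude of |x>|z> by (-1)^(x_j) (phase kickback), so input qubit j becomes |->.
  The last Hadamard layer then maps the input register to the basis state e_j, which is
  therefore measured with certainty. As i ranges over 0..n-2, the copied position j
  ranges over all positions except the eliminated one, k.\<close>

lemma bit_div_exp_nat: "bit ((a::nat) div 2 ^ m) k \<longleftrightarrow> bit a (m + k)"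
  by (simp flip: drop_bit_eq_div add: bit_drop_bit_eq)

lemma bit_mod_exp_nat: "bit ((a::nat) mod 2 ^ m) k \<longleftrightarrow> k < m \<and> bit a k"
  by (simp flip: take_bit_eq_mod add: bit_take_bit_iff)

lemma less_exp_iff_no_high_bits: "(a::nat) < 2 ^ q \<longleftrightarrow> (\<forall>k\<ge>q. \<not> bit a k)"
proof -
  have "a < 2 ^ q \<longleftrightarrow> a div 2 ^ q = 0"
    by (simp add: div_eq_0_iff)
  also have "\<dots> \<longleftrightarrow> (\<forall>k. \<not> bit a (q + k))"
    using bit_eq_iff[of "a div 2 ^ q" 0] by (simp add: bit_div_exp_nat)
  also have "\<dots> \<longleftrightarrow> (\<forall>k\<ge>q. \<not> bit a k)"
    by (metis le_add1 le_add_diff_inverse)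
  finally show ?thesis .
qed

lemma bit_high_low_nat:
  assumes "z < 2 ^ m"
  shows "bit (x * 2 ^ m + z :: nat) l \<longleftrightarrow> (if l < m then bit z l else bit x (l - m))"
  using assms bit_mod_exp_nat[of "x * 2 ^ m + z" m l] bit_div_exp_nat[of "x * 2 ^ m + z" m "l - m"]
  by (simp split: if_split)

definition product_state :: "nat \<Rightarrow> (nat \<Rightarrow> bool \<Rightarrow> complex) \<Rightarrow> state" where
  "product_state q g = (\<lambda>u. if u < 2 ^ q then \<Prod>l<q. g l (bit u l) else 0)"

definition qubit_hadamard :: "(bool \<Rightarrow> complex) \<Rightarrow> bool \<Rightarrow> complex" where
  "qubit_hadamard h = (\<lambda>b. (h False + (if b then -1 else 1) * h True) / complex_of_real (sqrt 2))"

definition qubit_ket :: "bool \<Rightarrow> bool \<Rightarrow> complex" where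
  "qubit_ket c = (\<lambda>b. if b = c then 1 else 0)"

definition hadamard_ket :: "bool \<Rightarrow> bool \<Rightarrow> complex" where
  "hadamard_ket c = (\<lambda>b. (if b \<and> c then -1 else 1) / complex_of_real (sqrt 2))"

lemma qubit_hadamard_qubit_ket: "qubit_hadamard (qubit_ket c) = hadamard_ket c"
  by (auto simp: qubit_hadamard_def qubit_ket_def hadamard_ket_def)

lemma qubit_hadamard_hadamard_ket: "qubit_hadamard (hadamard_ket c) = qubit_ket c"
proof -
  have "complex_of_real (sqrt 2) * complex_of_real (sqrt 2) = 2"
    by (simp flip: of_real_mult)
  then show ?thesis
    by (auto simp: qubit_hadamard_def qubit_ket_def hadamard_ket_def field_simps)
qed

lemma product_state_cong:
  "(\<And>l. l < q \<Longrightarrow> g l = g' l) \<Longrightarrow> product_state q g = product_state q g'"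
  unfolding product_state_def by (intro ext prod.cong) auto

lemma hadamard_product_state:
  assumes "j < q"
  shows "hadamard j (product_state q g) = product_state q (g(j := qubit_hadamard (g j)))"
proof
  fix u :: nat
  let ?rest = "\<lambda>w. \<Prod>l\<in>{..<q} - {j}. g l (bit w l)"
  have rest: "?rest (unset_bit j u) = ?rest u" "?rest (set_bit j u) = ?rest u"
    by (auto intro!: prod.cong simp: bit_unset_bit_iff bit_set_bit_iff)
  have "(\<Prod>l\<in>{..<q} - {j}. (g(j := h)) l (bit u l)) = ?rest u" for h
    by (rule prod.cong) auto
  moreover have "unset_bit j u < 2 ^ q \<longleftrightarrow> u < 2 ^ q" "set_bit j u < 2 ^ q \<longleftrightarrow> u < 2 ^ q"
    using assms by (auto simp: less_exp_iff_no_high_bits bit_unset_bit_iff bit_set_bit_iff)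
  ultimately show "hadamard j (product_state q g) u = product_state q (g(j := qubit_hadamard (g j))) u"
    using assms rest
    by (simp add: hadamard_def product_state_def prod.remove[of "{..<q}" j] qubit_hadamard_def
        bit_unset_bit_iff bit_set_bit_iff field_simps)
qed

lemma pauliX_product_state:
  assumes "j < q"
  shows "pauliX j (product_state q g) = product_state q (g(j := g j \<circ> Not))"
proof
  fix u :: nat
  have "(\<Prod>l\<in>{..<q} - {j}. g l (bit (flip_bit j u) l)) = (\<Prod>l\<in>{..<q} - {j}. g l (bit u l))"
    by (auto intro!: prod.cong simp: bit_flip_bit_iff)
  moreover have "(\<Prod>l\<in>{..<q} - {j}. (g(j := h)) l (bit u l)) = (\<Prod>l\<in>{..<q} - {j}. g l (bit u l))" for h
    by (rule prod.cong) auto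
  moreover have "flip_bit j u < 2 ^ q \<longleftrightarrow> u < 2 ^ q"
    using assms by (auto simp: less_exp_iff_no_high_bits bit_flip_bit_iff)
  ultimately show "pauliX j (product_state q g) u = product_state q (g(j := g j \<circ> Not)) u"
    using assms by (simp add: pauliX_def product_state_def prod.remove[of "{..<q}" j] bit_flip_bit_iff)
qed

lemma fold_qubitwise_product_state:
  assumes gate: "\<And>l g. l < q \<Longrightarrow> G l (product_state q g) = product_state q (g(l := F l (g l)))"
    and "distinct xs" and "set xs \<subseteq> {..<q}"
  shows "fold G xs (product_state q g) = product_state q (\<lambda>l. if l \<in> set xs then F l (g l) else g l)"
  using assms(2,3)
proof (induction xs arbitrary: g)
  case Nil
  then show ?case by simp
next
  case (Cons x xs)
  have "fold G (x # xs) (product_state q g) = fold G xs (product_state q (g(x := F x (g x))))"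
    using Cons.prems gate by simp
  also have "\<dots> = product_state q (\<lambda>l. if l \<in> set (x # xs) then F l (g l) else g l)"
    using Cons by (auto intro!: product_state_cong)
  finally show ?case .
qed

lemma fold_hadamard_product_state:
  assumes "distinct xs" and "set xs \<subseteq> {..<q}"
  shows "fold hadamard xs (product_state q g)
       = product_state q (\<lambda>l. if l \<in> set xs then qubit_hadamard (g l) else g l)"
  using fold_qubitwise_product_state[OF hadamard_product_state assms] .

lemma ket_0_product_state: "ket 0 = product_state q (\<lambda>l. qubit_ket False)"
proof
  fix u :: nat
  have "(\<Prod>l<q. qubit_ket False (bit u l)) = (if \<exists>l<q. bit u l then 0 else 1)"
    by (auto simp: qubit_ket_def intro!: prod.neutral)
  moreover have "u = 0 \<longleftrightarrow> (\<forall>l. \<not> bit u l)"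
    using bit_eq_iff[of u 0] by auto
  ultimately show "ket 0 u = product_state q (\<lambda>l. qubit_ket False) u"
    by (auto simp: ket_def product_state_def less_exp_iff_no_high_bits not_less)
qed

lemma Uf_phase_kickback:
  assumes copy: "\<And>x. x < 2 ^ n \<Longrightarrow> f x < 2 ^ m \<and> bit (f x) i = bit x j"
    and "i < m" and "j < n"
    and flat: "\<And>l. l < m \<Longrightarrow> l \<noteq> i \<Longrightarrow> g l True = g l False"
    and odd: "g i True = - g i False"
  shows "Uf n m f (product_state (n + m) g)
       = product_state (n + m) (g(m + j := \<lambda>b. (if b then -1 else 1) * g (m + j) b))"
proof
  fix u :: nat
  let ?sign = "\<lambda>l. if l = i \<and> bit u (m + j) then -1 else 1 :: complex"
  define x where "x = u div 2 ^ m"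
  define v where "v = x * 2 ^ m + xor (u mod 2 ^ m) (f x)"
  show "Uf n m f (product_state (n + m) g) u
      = product_state (n + m) (g(m + j := \<lambda>b. (if b then -1 else 1) * g (m + j) b)) u"
  proof (cases "u < 2 ^ (n + m)")
    case False
    then show ?thesis by (simp add: Uf_def product_state_def)
  next
    case True
    then have "x < 2 ^ n"
      by (simp add: x_def less_mult_imp_div_less power_add)
    then have fx: "f x < 2 ^ m" "bit (f x) i = bit u (m + j)"
      using copy by (auto simp: x_def bit_div_exp_nat)
    have xor_less: "xor (u mod 2 ^ m) (f x) < 2 ^ m"
      using fx(1) by (simp add: less_exp_iff_no_high_bits bit_xor_iff bit_mod_exp_nat)
    have "v < 2 ^ (n + m)"
      using True xor_less by (simp add: less_exp_iff_no_high_bits v_def bit_high_low_nat x_def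
          bit_div_exp_nat)
    have "g l (bit v l) = ?sign l * g l (bit u l)" if "l < n + m" for l
    proof -
      have "bit v l \<longleftrightarrow> (if l < m then bit u l \<noteq> bit (f x) l else bit u l)"
        using xor_less by (auto simp: v_def bit_high_low_nat bit_xor_iff bit_mod_exp_nat x_def bit_div_exp_nat)
      then show ?thesis
        using flat odd fx(2) \<open>i < m\<close> by (cases "l < m"; cases "l = i"; cases "bit u l") auto
    qed
    then have "(\<Prod>l<n + m. g l (bit v l)) = (\<Prod>l<n + m. ?sign l) * (\<Prod>l<n + m. g l (bit u l))"
      by (simp add: prod.distrib)
    also have "\<dots> = product_state (n + m) (g(m + j := \<lambda>b. (if b then -1 else 1) * g (m + j) b)) u"
      using True \<open>i < m\<close> \<open>j < n\<close>
      by (simp add: product_state_def prod.remove[of "{..<n + m}" "m + j"] prod.remove[of "{..<n + m}" i])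
    finally show ?thesis
      using True \<open>v < 2 ^ (n + m)\<close> by (simp add: Uf_def product_state_def v_def x_def)
  qed
qed

lemma first_register_basis_prob:
  assumes "\<delta> < 2 ^ n"
    and flat: "\<And>l b. l < m \<Longrightarrow> cmod (g l b) = 1 / sqrt 2"
    and basis: "\<And>l. l < n \<Longrightarrow> g (m + l) = qubit_ket (bit \<delta> l)"
  shows "(\<Sum>z<2 ^ m. (cmod (product_state (n + m) g (\<delta> * 2 ^ m + z)))\<^sup>2) = 1"
proof -
  have "(cmod (product_state (n + m) g (\<delta> * 2 ^ m + z)))\<^sup>2 = 1 / 2 ^ m" if "z < 2 ^ m" for z
  proof -
    let ?u = "\<delta> * 2 ^ m + z"
    have "?u < 2 ^ (n + m)"
      using that \<open>\<delta> < 2 ^ n\<close> by (auto simp: less_exp_iff_no_high_bits bit_high_low_nat)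
    have "cmod (g l (bit ?u l)) = (if l < m then 1 / sqrt 2 else 1)" if "l < n + m" for l
      using that flat basis[of "l - m"] \<open>z < 2 ^ m\<close>
      by (auto simp: bit_high_low_nat qubit_ket_def)
    then have "cmod (product_state (n + m) g ?u) = (\<Prod>l<n + m. if l < m then 1 / sqrt 2 else 1)"
      using \<open>?u < 2 ^ (n + m)\<close> by (simp add: product_state_def flip: prod_norm)
    also have "\<dots> = (1 / sqrt 2) ^ m"
    proof -
      have "{..<n + m} \<inter> {l. l < m} = {..<m}"
        by auto
      then show ?thesis
        by (simp add: prod.If_cases)
    qed
    finally have "(cmod (product_state (n + m) g ?u))\<^sup>2 = ((1 / sqrt 2)\<^sup>2) ^ m"
      by (simp flip: power_mult add: mult.commute)
    then show ?thesis
      by (simp add: power_divide)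
  qed
  then show ?thesis
    by simp
qed

lemma gpk_prob_copied_bit:
  assumes copy: "\<And>x. x < 2 ^ n \<Longrightarrow> f x < 2 ^ m \<and> bit (f x) i = bit x j"
    and "i < m" and "j < n"
  shows "gpk_prob n m f (2 ^ i) (2 ^ j) = 1"
proof -
  let ?flip_i = "\<lambda>l \<psi>. if bit ((2::nat) ^ i) l then pauliX l \<psi> else \<psi>"
  have flip_gate: "?flip_i l (product_state (n + m) g)
      = product_state (n + m) (g(l := (if l = i then g l \<circ> Not else g l)))" if "l < n + m" for l g
    using pauliX_product_state[OF that] by (auto simp: bit_exp_iff)
  have "fold ?flip_i [0..<m] (ket 0) = product_state (n + m)
      (\<lambda>l. if l \<in> set [0..<m] then (if l = i then qubit_ket False \<circ> Not else qubit_ket False)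
           else qubit_ket False)"
    unfolding ket_0_product_state[of "n + m"]
    by (rule fold_qubitwise_product_state[OF flip_gate]) auto
  also have "\<dots> = product_state (n + m) (\<lambda>l. qubit_ket (l = i))"
    using \<open>i < m\<close> by (auto simp: qubit_ket_def intro!: product_state_cong)
  finally have "fold ?flip_i [0..<m] (ket 0) = product_state (n + m) (\<lambda>l. qubit_ket (l = i))" .
  moreover have "fold hadamard [0..<n + m] (product_state (n + m) (\<lambda>l. qubit_ket (l = i)))
      = product_state (n + m) (\<lambda>l. hadamard_ket (l = i))"
    by (subst fold_hadamard_product_state) (auto simp: qubit_hadamard_qubit_ket intro!: product_state_cong)
  moreover have "Uf n m f (product_state (n + m) (\<lambda>l. hadamard_ket (l = i)))
      = product_state (n + m) (\<lambda>l. hadamard_ket (l = i \<or> l = m + j))"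
    using \<open>i < m\<close> by (subst Uf_phase_kickback[OF copy \<open>i < m\<close> \<open>j < n\<close>])
      (auto simp: hadamard_ket_def intro!: product_state_cong)
  moreover have "fold hadamard [m..<n + m] (product_state (n + m) (\<lambda>l. hadamard_ket (l = i \<or> l = m + j)))
      = product_state (n + m) (\<lambda>l. if l < m then hadamard_ket (l = i) else qubit_ket (l = m + j))"
    using \<open>i < m\<close> by (subst fold_hadamard_product_state)
      (auto simp: qubit_hadamard_hadamard_ket intro!: product_state_cong)
  ultimately have final_state: "gpk_state n m f (2 ^ i)
      = product_state (n + m) (\<lambda>l. if l < m then hadamard_ket (l = i) else qubit_ket (l = m + j))"
    by (simp add: gpk_state_def)
  have "cmod (hadamard_ket c b) = 1 / sqrt 2" for c b
    by (simp add: hadamard_ket_def norm_divide)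
  then show ?thesis
    unfolding gpk_prob_def final_state using \<open>j < n\<close>
    by (intro first_register_basis_prob) (auto simp: bit_exp_iff)
qed

definition skip_index :: "nat \<Rightarrow> nat \<Rightarrow> nat" where
  "skip_index k i = (if i < k then i else Suc i)"

lemma inj_skip_index: "inj (skip_index k)"
  by (auto simp: inj_def skip_index_def split: if_splits)

lemma skip_index_image:
  assumes "k < n"
  shows "skip_index k ` {..<n - 1} = {..<n} - {k}"
proof
  show "skip_index k ` {..<n - 1} \<subseteq> {..<n} - {k}"
    by (auto simp: skip_index_def)
  show "{..<n} - {k} \<subseteq> skip_index k ` {..<n - 1}"
  proof
    fix j
    assume j: "j \<in> {..<n} - {k}"
    show "j \<in> skip_index k ` {..<n - 1}"
    proof (cases "j < k")
      case True
      then show ?thesis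
        using assms by (auto simp: skip_index_def image_iff intro!: bexI[of _ j])
    next
      case False
      then show ?thesis
        using j by (auto simp: skip_index_def image_iff intro!: bexI[of _ "j - 1"])
    qed
  qed
qed

lemma eliminates_bit_copies_bit:
  assumes "eliminates_bit n f k" and "i < n - 1" and "x < 2 ^ n"
  shows "f x < 2 ^ (n - 1) \<and> bit (f x) i = bit x (skip_index k i)"
  using assms by (auto simp: eliminates_bit_def skip_index_def)

theorem lemma2p2:
  fixes n k :: nat and f :: "nat \<Rightarrow> nat"
  assumes "n \<ge> 2"
    and "eliminates_bit n f k"
  shows "\<exists>out :: nat \<Rightarrow> nat.
           (\<forall>i < n - 1. out i < n \<and> gpk_prob n (n - 1) f (2 ^ i) (2 ^ out i) = 1)
         \<and> inj_on out {..<n - 1}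
         \<and> {j. j < n \<and> j \<notin> out ` {..<n - 1}} = {k}"
proof -
  have "k < n"
    using assms(2) by (simp add: eliminates_bit_def)
  then have image: "skip_index k ` {..<n - 1} = {..<n} - {k}"
    by (rule skip_index_image)
  have "gpk_prob n (n - 1) f (2 ^ i) (2 ^ skip_index k i) = 1" if "i < n - 1" for i
    using image that
    by (intro gpk_prob_copied_bit eliminates_bit_copies_bit[OF assms(2)]) auto
  moreover have "skip_index k i < n" if "i < n - 1" for i
    using image that by auto
  ultimately show ?thesis
    using image inj_on_subset[OF inj_skip_index] \<open>k < n\<close>
    by (intro exI[of _ "skip_index k"]) auto
qed

end
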